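(* There is a primitive recursive function $\bar h:\mathbb{N}^3\to\mathbb{N}$ such that for all integers $n\ge1$, $k$, all finite nonempty $X\subseteq\mathbb{N}$, all families $(T_\rho:\rho\in 2^{\min X})$ and all $C$ satisfying (a) $|X|\ge\bar h(\min X,n,k)$, (b) each $T_\rho$ is an $X$-quasistrong tree all of whose elements are compatible with $\rho$, (c) $C:\bigcup_\rho T_\rho\to k$ is a coloring, there exist $Z\subseteq X$ with $|Z|=n$ and trees $S_\rho\subseteq T_\rho$ ($\rho\in 2^{\min X}$) such that (i) $\min Z=\min X$, and (ii) each $S_\rho$ is $Z$-quasistrong and $(C,Z)$-prehomogeneous.
   Context: Strings are finite binary strings with $\preceq$ the initial-segment order; two strings are compatible if one is an initial segment of the other; $2^i$ also denotes the set of strings of length $i$; a tree is a set of strings closed under initial segments. For finite $X=\{x_0<\dots<x_n\}$, a finite tree $T$ is $X$-quasistrong if $T\cap 2^{x_i}\ne\emptyset$ for all $i\le n$ and for each $i<n$ every $\sigma\in T\cap2^{x_i}$ has exactly two incompatible extensions in $T\cap 2^{x_{i+1}}$. A tree $T$ is $(C,X)$-prehomogeneous if there is a color $c$ such that for every $i<n$, $\sigma\in T\cap 2^{x_i}$ and $\tau\in T\cap 2^{x_{i+1}}$ with $\sigma\prec\tau$, there is $\zeta\in T$ with $\sigma\preceq\zeta\preceq\tau$ and $C(\zeta)=c$. *)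

theory Defs
  imports Main "HOL-Library.Sublist"
begin

text \<open>Strings are finite binary strings, represented as bool lists; the
initial-segment order is prefix.\<close>

definition compatible :: "bool list \<Rightarrow> bool list \<Rightarrow> bool" where
  "compatible s t \<longleftrightarrow> prefix s t \<or> prefix t s"

definition is_tree :: "bool list set \<Rightarrow> bool" where
  "is_tree T \<longleftrightarrow> (\<forall>s\<in>T. \<forall>t. prefix t s \<longrightarrow> t \<in> T)"

definition level :: "bool list set \<Rightarrow> nat \<Rightarrow> bool list set" where
  "level T i = {s\<in>T. length s = i}"

definition consec :: "nat set \<Rightarrow> nat \<Rightarrow> nat \<Rightarrow> bool" where
  "consec X x x' \<longleftrightarrow> x \<in> X \<and> x' \<in> X \<and> x < x' \<and> (\<forall>y\<in>X. \<not> (x < y \<and> y < x'))"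

definition quasistrong :: "nat set \<Rightarrow> bool list set \<Rightarrow> bool" where
  "quasistrong X T \<longleftrightarrow> finite T \<and> is_tree T \<and>
     (\<forall>x\<in>X. level T x \<noteq> {}) \<and>
     (\<forall>x x'. consec X x x' \<longrightarrow>
        (\<forall>s\<in>level T x.
           (\<exists>t1 t2. t1 \<in> level T x' \<and> t2 \<in> level T x' \<and> prefix s t1 \<and> prefix s t2 \<and>
                    \<not> compatible t1 t2 \<and>
                    {t\<in>level T x'. prefix s t} = {t1, t2})))"

definition prehomogeneous :: "(bool list \<Rightarrow> nat) \<Rightarrow> nat set \<Rightarrow> bool list set \<Rightarrow> bool" where
  "prehomogeneous C X T \<longleftrightarrow> (\<exists>c. \<forall>x x'. consec X x x' \<longrightarrow>
      (\<forall>s\<in>level T x. \<forall>t\<in>level T x'. prefix s t \<longrightarrow>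
         (\<exists>z\<in>T. prefix s z \<and> prefix z t \<and> C z = c)))"

text \<open>Primitive recursive functions of arity n, as functions on argument lists
(only values on lists of length n matter).\<close>
inductive prim_rec :: "nat \<Rightarrow> (nat list \<Rightarrow> nat) \<Rightarrow> bool" where
  pr_zero: "prim_rec n (\<lambda>_. 0)"
| pr_succ: "prim_rec 1 (\<lambda>xs. Suc (hd xs))"
| pr_proj: "i < n \<Longrightarrow> prim_rec n (\<lambda>xs. xs ! i)"
| pr_comp: "prim_rec m g \<Longrightarrow> length fs = m \<Longrightarrow> (\<forall>f\<in>set fs. prim_rec n f) \<Longrightarrow>
            prim_rec n (\<lambda>xs. g (map (\<lambda>f. f xs) fs))"
| pr_rec: "prim_rec n g \<Longrightarrow> prim_rec (Suc (Suc n)) h \<Longrightarrow>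
           prim_rec (Suc n) (\<lambda>xs. rec_nat (g (tl xs)) (\<lambda>y r. h (r # y # tl xs)) (hd xs))"

definition primrec3 :: "(nat \<Rightarrow> nat \<Rightarrow> nat \<Rightarrow> nat) \<Rightarrow> bool" where
  "primrec3 h \<longleftrightarrow> (\<exists>f. prim_rec 3 f \<and> (\<forall>a b c. h a b c = f [a, b, c]))"

end

theory Submission
  imports Defs
begin

text \<open>For one tree whose colours lie in a set K of at most k colours, n^(k+1) levels
suffice, by induction on k. Fix a colour c in K and let D = n^k. If c is dense, i.e. above every
node any D consecutive levels of X contain a branch meeting c, choose n levels of X spaced D apart
and build a quasistrong subtree on them level by level, routing every link through a node of
colour c. Otherwise some node \<tau> has a cone over D levels of X in which c does not occur above
\<tau>; the induction hypothesis applies to this cone with one colour fewer, and since the cone is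
a single branch below \<tau>, its lowest level may be moved down to Min X. The 2^(Min X) trees are
treated one after the other, each time thinning out the levels; this gives the bound
n^((k+1)^(2^(Min X))).\<close>

section \<open>A primitive recursive bound\<close>

definition is_prim_rec :: "nat \<Rightarrow> (nat list \<Rightarrow> nat) \<Rightarrow> bool" where
  "is_prim_rec n g \<longleftrightarrow> (\<exists>f. prim_rec n f \<and> (\<forall>xs. length xs = n \<longrightarrow> f xs = g xs))"

lemma is_prim_rec_zero: "is_prim_rec n (\<lambda>_. 0)"
  unfolding is_prim_rec_def using pr_zero by blast

lemma is_prim_rec_succ: "is_prim_rec 1 (\<lambda>xs. Suc (xs ! 0))"
  unfolding is_prim_rec_def using pr_succ by (metis hd_conv_nth list.size(3) zero_neq_one)

lemma is_prim_rec_proj: "i < n \<Longrightarrow> is_prim_rec n (\<lambda>xs. xs ! i)"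
  unfolding is_prim_rec_def using pr_proj by blast

lemma is_prim_rec_comp:
  assumes g: "is_prim_rec m g" and fs: "length fs = m" "\<forall>f\<in>set fs. is_prim_rec n f"
    and F: "\<And>xs. length xs = n \<Longrightarrow> F xs = g (map (\<lambda>f. f xs) fs)"
  shows "is_prim_rec n F"
proof -
  obtain g' where g': "prim_rec m g'" "\<forall>xs. length xs = m \<longrightarrow> g' xs = g xs"
    using g unfolding is_prim_rec_def by blast
  obtain P where P: "\<forall>f\<in>set fs. prim_rec n (P f) \<and> (\<forall>xs. length xs = n \<longrightarrow> P f xs = f xs)"
    using fs(2) unfolding is_prim_rec_def by metis
  have "prim_rec n (\<lambda>xs. g' (map (\<lambda>f. f xs) (map P fs)))"
    by (rule pr_comp[OF g'(1)]) (use fs(1) P in auto)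
  moreover have "g' (map (\<lambda>f. f xs) (map P fs)) = F xs" if "length xs = n" for xs
    using that g'(2) P F fs(1) by (simp cong: map_cong)
  ultimately show ?thesis unfolding is_prim_rec_def by blast
qed

lemma is_prim_rec_rec:
  assumes g: "is_prim_rec n g" and h: "is_prim_rec (Suc (Suc n)) h"
    and F: "\<And>x ys. length ys = n \<Longrightarrow> F (x # ys) = rec_nat (g ys) (\<lambda>y r. h (r # y # ys)) x"
  shows "is_prim_rec (Suc n) F"
proof -
  obtain g' where g': "prim_rec n g'" "\<forall>xs. length xs = n \<longrightarrow> g' xs = g xs"
    using g unfolding is_prim_rec_def by blast
  obtain h' where h': "prim_rec (Suc (Suc n)) h'"
    "\<forall>xs. length xs = Suc (Suc n) \<longrightarrow> h' xs = h xs"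
    using h unfolding is_prim_rec_def by blast
  have "rec_nat (g' (tl xs)) (\<lambda>y r. h' (r # y # tl xs)) (hd xs) = F xs"
    if "length xs = Suc n" for xs
  proof -
    obtain x ys where xs: "xs = x # ys" and ys: "length ys = n"
      using \<open>length xs = Suc n\<close> by (cases xs) auto
    have "rec_nat (g' ys) (\<lambda>y r. h' (r # y # ys)) x = rec_nat (g ys) (\<lambda>y r. h (r # y # ys)) x"
      by (induction x) (simp_all add: g'(2) h'(2) ys)
    then show ?thesis using F[OF ys] xs by simp
  qed
  then show ?thesis using pr_rec[OF g'(1) h'(1)] unfolding is_prim_rec_def by blast
qed

lemma is_prim_rec_add: "is_prim_rec 2 (\<lambda>xs. xs ! 0 + xs ! 1)"
proof -
  have g: "is_prim_rec 1 (\<lambda>xs. xs ! 0)"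
    by (rule is_prim_rec_proj) simp
  have h: "is_prim_rec (Suc (Suc 1)) (\<lambda>zs. Suc (zs ! 0))"
    by (rule is_prim_rec_comp[OF is_prim_rec_succ, of "[\<lambda>zs. zs ! 0]"])
      (auto intro: is_prim_rec_proj)
  have "is_prim_rec (Suc 1) (\<lambda>xs. xs ! 0 + xs ! 1)"
    by (rule is_prim_rec_rec[OF g h]) (induct_tac x, auto)
  then show ?thesis by (simp add: numeral_2_eq_2)
qed

lemma is_prim_rec_mult: "is_prim_rec 2 (\<lambda>xs. xs ! 0 * xs ! 1)"
proof -
  have h: "is_prim_rec (Suc (Suc 1)) (\<lambda>zs. zs ! 0 + zs ! 2)"
    by (rule is_prim_rec_comp[OF is_prim_rec_add, of "[\<lambda>zs. zs ! 0, \<lambda>zs. zs ! 2]"])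
      (auto intro: is_prim_rec_proj)
  have "is_prim_rec (Suc 1) (\<lambda>xs. xs ! 0 * xs ! 1)"
    by (rule is_prim_rec_rec[OF is_prim_rec_zero h])
      (induct_tac x, auto simp: numeral_2_eq_2)
  then show ?thesis by (simp add: numeral_2_eq_2)
qed

lemma is_prim_rec_power: "is_prim_rec 2 (\<lambda>xs. xs ! 1 ^ xs ! 0)"
proof -
  have g: "is_prim_rec 1 (\<lambda>_. 1)"
    by (rule is_prim_rec_comp[OF is_prim_rec_succ, of "[\<lambda>_. 0]"]) (auto intro: is_prim_rec_zero)
  have h: "is_prim_rec (Suc (Suc 1)) (\<lambda>zs. zs ! 0 * zs ! 2)"
    by (rule is_prim_rec_comp[OF is_prim_rec_mult, of "[\<lambda>zs. zs ! 0, \<lambda>zs. zs ! 2]"])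
      (auto intro: is_prim_rec_proj)
  have "is_prim_rec (Suc 1) (\<lambda>xs. xs ! 1 ^ xs ! 0)"
    by (rule is_prim_rec_rec[OF g h])
      (induct_tac x, auto simp: numeral_2_eq_2)
  then show ?thesis by (simp add: numeral_2_eq_2)
qed

definition tree_ramsey_bound :: "nat \<Rightarrow> nat \<Rightarrow> nat \<Rightarrow> nat" where
  "tree_ramsey_bound a n k = n ^ (Suc k ^ 2 ^ a)"

lemma primrec3_tree_ramsey_bound: "primrec3 tree_ramsey_bound"
proof -
  have pow: "is_prim_rec 3 (\<lambda>xs. b xs ^ e xs)" if "is_prim_rec 3 e" "is_prim_rec 3 b" for e b
    by (rule is_prim_rec_comp[OF is_prim_rec_power, of "[e, b]"]) (use that in auto)
  have succ: "is_prim_rec 3 (\<lambda>xs. Suc (f xs))" if "is_prim_rec 3 f" for f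
    by (rule is_prim_rec_comp[OF is_prim_rec_succ, of "[f]"]) (use that in auto)
  have "is_prim_rec 3 (\<lambda>_. Suc (Suc 0))"
    by (intro succ is_prim_rec_zero)
  then have "is_prim_rec 3 (\<lambda>xs. Suc (Suc 0) ^ xs ! 0)"
    using pow[OF is_prim_rec_proj[of 0]] by simp
  then have "is_prim_rec 3 (\<lambda>xs. Suc (xs ! 2) ^ Suc (Suc 0) ^ xs ! 0)"
    using pow succ[OF is_prim_rec_proj[of 2]] by simp
  then have "is_prim_rec 3 (\<lambda>xs. xs ! 1 ^ Suc (xs ! 2) ^ Suc (Suc 0) ^ xs ! 0)"
    using pow is_prim_rec_proj[of 1] by simp
  then obtain f where "prim_rec 3 f"
    "\<forall>xs. length xs = 3 \<longrightarrow> f xs = tree_ramsey_bound (xs ! 0) (xs ! 1) (xs ! 2)"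
    unfolding is_prim_rec_def tree_ramsey_bound_def numeral_2_eq_2 by blast
  then show ?thesis unfolding primrec3_def by (intro exI[of _ f]) auto
qed

section \<open>Strings, trees and consecutive levels\<close>

lemma level_iff [simp]: "s \<in> level T x \<longleftrightarrow> s \<in> T \<and> length s = x"
  by (simp add: level_def)

lemma prefix_same_length_eq: "prefix s u \<Longrightarrow> prefix t u \<Longrightarrow> length s = length t \<Longrightarrow> s = t"
  by (metis prefix_length_prefix prefix_order.antisym order_refl)

lemma compatible_prefix: "compatible s t \<Longrightarrow> length s \<le> length t \<Longrightarrow> prefix s t"
  unfolding compatible_def by (metis prefix_length_le prefix_same_length_eq prefix_order.refl le_antisym)

lemma compatible_same_length: "compatible s t \<Longrightarrow> length s = length t \<Longrightarrow> s = t"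
  by (metis compatible_prefix order_refl prefix_same_length_eq prefix_order.refl)

lemma compatible_prefix_closed: "prefix u t \<Longrightarrow> compatible t \<tau> \<Longrightarrow> compatible u \<tau>"
  unfolding compatible_def using prefix_order.order_trans prefix_same_cases by blast

lemma compatible_eq_take: "compatible s \<tau> \<Longrightarrow> length s \<le> length \<tau> \<Longrightarrow> s = take (length s) \<tau>"
  using compatible_prefix by (metis append_eq_conv_conj prefix_def)

lemma is_treeD: "is_tree T \<Longrightarrow> t \<in> T \<Longrightarrow> prefix s t \<Longrightarrow> s \<in> T"
  unfolding is_tree_def by blast

lemma finite_length_le: "finite {s :: bool list. length s \<le> n}"
  using finite_lists_length_le[of "UNIV :: bool set" n] by simp

lemma quasistrongD:
  assumes "quasistrong X T"
  shows "finite T" "is_tree T" "\<And>x. x \<in> X \<Longrightarrow> level T x \<noteq> {}"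
    "\<And>x x' s. consec X x x' \<Longrightarrow> s \<in> level T x \<Longrightarrow>
       \<exists>t1 t2. t1 \<in> level T x' \<and> t2 \<in> level T x' \<and> prefix s t1 \<and> prefix s t2 \<and>
         \<not> compatible t1 t2 \<and> {t\<in>level T x'. prefix s t} = {t1, t2}"
  using assms unfolding quasistrong_def by blast+

lemma consec_next:
  assumes "finite X" "x \<in> X" "y \<in> X" "x < y"
  obtains x' where "consec X x x'" "x' \<le> y"
proof
  let ?A = "{z\<in>X. x < z}"
  have A: "finite ?A" "?A \<noteq> {}" using assms by auto
  then have "Min ?A \<in> ?A" by (rule Min_in)
  then show "consec X x (Min ?A)"
    using assms(2) Min_le[OF A(1)] unfolding consec_def by (auto simp: not_less) (meson not_le)
  show "Min ?A \<le> y" using A assms by simp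
qed

lemma consec_prev:
  assumes "finite X" "x \<in> X" "y \<in> X" "x < y"
  obtains y' where "consec X y' y" "x \<le> y'"
proof
  let ?A = "{z\<in>X. z < y}"
  have A: "finite ?A" "?A \<noteq> {}" using assms by auto
  then have "Max ?A \<in> ?A" by (rule Max_in)
  then show "consec X (Max ?A) y"
    using assms(3) Max_ge[OF A(1)] unfolding consec_def by (auto simp: not_less)
  show "x \<le> Max ?A" using A assms by simp
qed

lemma consec_insert_greater:
  assumes A: "finite A" "A \<noteq> {}" and b: "\<forall>a\<in>A. a < b"
  shows "consec (insert b A) x x' \<longleftrightarrow> consec A x x' \<or> (x = Max A \<and> x' = b)"
proof -
  have M: "Max A \<in> A" "\<And>a. a \<in> A \<Longrightarrow> a \<le> Max A" "Max A < b" using A b by auto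
  show ?thesis
  proof
    assume c: "consec (insert b A) x x'"
    then have x: "x \<in> A" "x < x'" using b unfolding consec_def by auto
    show "consec A x x' \<or> (x = Max A \<and> x' = b)"
    proof (cases "x' = b")
      case True
      then have "x = Max A" using c M x unfolding consec_def
        by (meson insertCI le_neq_implies_less)
      then show ?thesis using True by simp
    next
      case False
      then show ?thesis using c x unfolding consec_def by auto
    qed
  next
    assume "consec A x x' \<or> (x = Max A \<and> x' = b)"
    then show "consec (insert b A) x x'"
    proof
      assume "consec A x x'"
      then show ?thesis using b unfolding consec_def by (metis insert_iff order.asym)
    next
      assume "x = Max A \<and> x' = b"
      then show ?thesis using M b unfolding consec_def by (auto simp: not_le[symmetric])
    qed
  qed
qed

lemma consec_interval:
  assumes c: "consec {z\<in>X. a \<le> z \<and> z \<le> b} x x'"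
  shows "consec X x x'"
proof -
  have c': "x \<in> X" "x' \<in> X" "x < x'" "a \<le> x" "x' \<le> b"
    "\<forall>w\<in>{z\<in>X. a \<le> z \<and> z \<le> b}. \<not> (x < w \<and> w < x')"
    using c unfolding consec_def by simp_all
  have "\<not> (x < w \<and> w < x')" if "w \<in> X" for w
  proof
    assume "x < w \<and> w < x'"
    then have "w \<in> {z\<in>X. a \<le> z \<and> z \<le> b}" using c'(4,5) that by simp
    then show False using c'(6) \<open>x < w \<and> w < x'\<close> by blast
  qed
  then show ?thesis using c'(1-3) unfolding consec_def by simp
qed

lemma quasistrong_two_extensions:
  assumes qs: "quasistrong X T" and fin: "finite X"
  shows "x \<in> X \<Longrightarrow> y \<in> X \<Longrightarrow> x < y \<Longrightarrow> s \<in> level T x \<Longrightarrow>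
    \<exists>t1 t2. t1 \<in> level T y \<and> t2 \<in> level T y \<and> prefix s t1 \<and> prefix s t2 \<and> t1 \<noteq> t2"
proof (induction y rule: less_induct)
  case (less y)
  obtain y' where y': "consec X y' y" "x \<le> y'" using consec_prev[OF fin less.prems(1-3)] .
  obtain u where u: "u \<in> level T y'" "prefix s u"
  proof (cases "x = y'")
    case True
    then show ?thesis using that less.prems(4) by blast
  next
    case False
    then show ?thesis
      using that less.IH[of y'] y' less.prems(1,4) unfolding consec_def by force
  qed
  obtain t1 t2 where t: "t1 \<in> level T y" "t2 \<in> level T y" "prefix u t1" "prefix u t2"
    "\<not> compatible t1 t2"
    using quasistrongD(4)[OF qs y'(1) u(1)] by blast
  have "t1 \<noteq> t2" using t(5) unfolding compatible_def by auto
  moreover have "prefix s t1" "prefix s t2" using t(3,4) u(2) by auto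
  ultimately show ?case using t(1,2) by blast
qed

lemma quasistrong_extension:
  assumes "quasistrong X T" "finite X" "x \<in> X" "y \<in> X" "x \<le> y" "s \<in> level T x"
  obtains t where "t \<in> level T y" "prefix s t"
proof (cases "x = y")
  case True
  then show ?thesis using that assms(6) by blast
next
  case False
  then show ?thesis
    using that quasistrong_two_extensions[OF assms(1-4) _ assms(6)] assms(5) by force
qed

section \<open>Prehomogeneity with a fixed colour\<close>

definition colour_between :: "(bool list \<Rightarrow> nat) \<Rightarrow> nat \<Rightarrow> bool list \<Rightarrow> bool list \<Rightarrow> bool" where
  "colour_between C c s t \<longleftrightarrow> (\<exists>z. prefix s z \<and> prefix z t \<and> C z = c)"

definition prehomogeneous_with :: "(bool list \<Rightarrow> nat) \<Rightarrow> nat \<Rightarrow> nat set \<Rightarrow> bool list set \<Rightarrow> bool" where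
  "prehomogeneous_with C c Z S \<longleftrightarrow> (\<forall>x x'. consec Z x x' \<longrightarrow>
     (\<forall>s\<in>level S x. \<forall>t\<in>level S x'. prefix s t \<longrightarrow> colour_between C c s t))"

lemma prehomogeneous_withD:
  "prehomogeneous_with C c Z S \<Longrightarrow> consec Z x x' \<Longrightarrow> s \<in> level S x \<Longrightarrow> t \<in> level S x' \<Longrightarrow>
    prefix s t \<Longrightarrow> colour_between C c s t"
  unfolding prehomogeneous_with_def by blast

lemma colour_between_mono:
  "prefix s' s \<Longrightarrow> colour_between C c s t \<Longrightarrow> prefix t t' \<Longrightarrow> colour_between C c s' t'"
  unfolding colour_between_def using prefix_order.order_trans by metis

lemma prehomogeneous_iff_prehomogeneous_with:
  assumes "is_tree S"
  shows "prehomogeneous C Z S \<longleftrightarrow> (\<exists>c. prehomogeneous_with C c Z S)"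
proof
  assume "prehomogeneous C Z S"
  then show "\<exists>c. prehomogeneous_with C c Z S"
    unfolding prehomogeneous_def prehomogeneous_with_def colour_between_def by meson
next
  assume "\<exists>c. prehomogeneous_with C c Z S"
  moreover have "z \<in> S" if "prefix z t" "t \<in> level S x'" for z t x'
    using is_treeD[OF assms, of t z] that by simp
  ultimately show "prehomogeneous C Z S"
    unfolding prehomogeneous_def prehomogeneous_with_def colour_between_def by meson
qed

lemma prehomogeneous_with_between:
  assumes qs: "quasistrong X T" and fin: "finite X" and ph: "prehomogeneous_with C c X T"
    and xy: "x \<in> X" "y \<in> X" "x < y" and s: "s \<in> level T x" and t: "t \<in> level T y"
    and st: "prefix s t"
  shows "colour_between C c s t"
proof -
  obtain x' where x': "consec X x x'" "x' \<le> y" using consec_next[OF fin xy] .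
  let ?u = "take x' t"
  have u: "?u \<in> level T x'"
    using t x'(2) is_treeD[OF quasistrongD(2)[OF qs] _ take_is_prefix] by simp
  have "x < x'" using x'(1) unfolding consec_def by simp
  then have "prefix s ?u"
    using s t st x'(2) by (intro prefix_length_prefix[OF st take_is_prefix]) simp
  then have "colour_between C c s ?u" by (rule prehomogeneous_withD[OF ph x'(1) s u])
  then show ?thesis using colour_between_mono take_is_prefix by blast
qed

section \<open>Growing quasistrong subtrees level by level\<close>

definition graft :: "bool list set \<Rightarrow> bool list set \<Rightarrow> bool list set" where
  "graft S N = S \<union> {u. \<exists>t\<in>N. prefix u t}"

lemma graft_subset:
  assumes "is_tree T" "S \<subseteq> T" "N \<subseteq> T"
  shows "graft S N \<subseteq> T"
proof
  fix u assume "u \<in> graft S N"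
  then consider "u \<in> S" | t where "t \<in> N" "prefix u t" unfolding graft_def by blast
  then show "u \<in> T"
    by cases (use assms is_treeD[OF assms(1)] in auto)
qed

lemma is_tree_graft:
  assumes "is_tree S"
  shows "is_tree (graft S N)"
  unfolding is_tree_def
proof (intro ballI allI impI)
  fix u v assume "u \<in> graft S N" "prefix v u"
  then consider "u \<in> S" | t where "t \<in> N" "prefix v t"
    unfolding graft_def using prefix_order.order_trans by blast
  then show "v \<in> graft S N"
    by cases (use is_treeD[OF assms] \<open>prefix v u\<close> in \<open>auto simp: graft_def\<close>)
qed

lemma graft_length_le:
  assumes "\<forall>s\<in>S. length s \<le> y" "\<forall>t\<in>N. length t \<le> y"
  shows "\<forall>s\<in>graft S N. length s \<le> y"
  using assms prefix_length_le order_trans unfolding graft_def by blast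

lemma level_graft_top:
  assumes "\<forall>s\<in>S. length s < y" "\<forall>t\<in>N. length t = y"
  shows "level (graft S N) y = N"
proof
  show "level (graft S N) y \<subseteq> N"
  proof
    fix u assume u: "u \<in> level (graft S N) y"
    then obtain t where "t \<in> N" "prefix u t" using assms(1) unfolding graft_def by auto
    then show "u \<in> N" using u assms(2) prefix_same_length_eq[of u t t] by simp
  qed
  show "N \<subseteq> level (graft S N) y" using assms(2) unfolding graft_def by auto
qed

lemma level_graft_below:
  assumes tree: "is_tree S" and N: "\<forall>t\<in>N. \<exists>s\<in>level S m. prefix s t" and "x \<le> m"
  shows "level (graft S N) x = level S x"
proof
  show "level (graft S N) x \<subseteq> level S x"
  proof
    fix u assume u: "u \<in> level (graft S N) x"
    show "u \<in> level S x"
    proof (cases "u \<in> S")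
      case False
      then obtain t where t: "t \<in> N" "prefix u t" using u unfolding graft_def by auto
      then obtain s where s: "s \<in> level S m" "prefix s t" using N by blast
      have "length u \<le> length s" using u s(1) \<open>x \<le> m\<close> by simp
      then have "prefix u s" using prefix_length_prefix[OF t(2) s(2)] by simp
      then show ?thesis using is_treeD[OF tree, of s u] s(1) u by simp
    qed (use u in simp)
  qed
  show "level S x \<subseteq> level (graft S N) x" unfolding graft_def by auto
qed

lemma quasistrong_graft:
  assumes qs: "quasistrong Y S" and Y: "finite Y" "Y \<noteq> {}"
    and short: "\<forall>s\<in>S. length s \<le> Max Y" and y: "Max Y < y"
    and N: "\<forall>t\<in>N. length t = y \<and> (\<exists>s\<in>level S (Max Y). prefix s t)"
    and split: "\<forall>s\<in>level S (Max Y). \<exists>t1 t2. t1 \<noteq> t2 \<and> {t\<in>N. prefix s t} = {t1, t2}"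
  shows "quasistrong (insert y Y) (graft S N)"
proof -
  let ?G = "graft S N"
  have tree: "is_tree S" using quasistrongD(2)[OF qs] .
  have top: "level ?G y = N"
    using short y N by (intro level_graft_top) auto
  have below: "level ?G x = level S x" if "x \<in> Y" for x
    using level_graft_below[OF tree] N Max_ge[OF Y(1) that] by blast
  have greater: "\<forall>a\<in>Y. a < y" using Max_ge[OF Y(1)] y by (meson le_less_trans)
  have "\<forall>s\<in>?G. length s \<le> y"
    using short y N by (intro graft_length_le) auto
  then have "finite ?G" using finite_subset[OF _ finite_length_le] by blast
  moreover have "level ?G x \<noteq> {}" if "x \<in> insert y Y" for x
  proof (cases "x = y")
    case True
    obtain s where "s \<in> level S (Max Y)" using quasistrongD(3)[OF qs Max_in[OF Y]] by blast
    then show ?thesis using split top True by blast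
  qed (use that below quasistrongD(3)[OF qs] in auto)
  moreover have "\<exists>t1 t2. t1 \<in> level ?G x' \<and> t2 \<in> level ?G x' \<and> prefix s t1 \<and> prefix s t2 \<and>
      \<not> compatible t1 t2 \<and> {t\<in>level ?G x'. prefix s t} = {t1, t2}"
    if c: "consec (insert y Y) x x'" and s: "s \<in> level ?G x" for x x' s
    using c unfolding consec_insert_greater[OF Y greater]
  proof
    assume "consec Y x x'"
    then have "x \<in> Y" "x' \<in> Y" unfolding consec_def by simp_all
    then show ?thesis
      using quasistrongD(4)[OF qs \<open>consec Y x x'\<close>] s below by simp
  next
    assume xx': "x = Max Y \<and> x' = y"
    then have "s \<in> level S (Max Y)" using s below Max_in[OF Y] by simp
    then obtain t1 t2 where t: "t1 \<noteq> t2" "{t\<in>N. prefix s t} = {t1, t2}" using split by blast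
    then have "t1 \<in> N" "t2 \<in> N" "prefix s t1" "prefix s t2" by auto
    moreover have "\<not> compatible t1 t2"
      using t(1) \<open>t1 \<in> N\<close> \<open>t2 \<in> N\<close> N compatible_same_length by metis
    ultimately show ?thesis using t(2) top xx' by auto
  qed
  ultimately show ?thesis
    unfolding quasistrong_def using is_tree_graft[OF tree] by blast
qed

lemma choose_two_extensions:
  assumes ext: "\<forall>s\<in>L. \<exists>t1 t2. t1 \<in> M \<and> t2 \<in> M \<and> prefix s t1 \<and> prefix s t2 \<and> t1 \<noteq> t2 \<and>
      P s t1 \<and> P s t2"
    and same_length: "\<forall>s\<in>L. length s = m"
  obtains N where "N \<subseteq> M" "\<forall>t\<in>N. \<exists>s\<in>L. prefix s t"
    "\<forall>s\<in>L. \<exists>t1 t2. t1 \<noteq> t2 \<and> {t\<in>N. prefix s t} = {t1, t2} \<and> P s t1 \<and> P s t2"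
proof -
  obtain f1 f2 where f: "\<And>s. s \<in> L \<Longrightarrow> f1 s \<in> M \<and> f2 s \<in> M \<and> prefix s (f1 s) \<and>
      prefix s (f2 s) \<and> f1 s \<noteq> f2 s \<and> P s (f1 s) \<and> P s (f2 s)"
    using bchoice[OF ext] by (metis bchoice)
  let ?N = "f1 ` L \<union> f2 ` L"
  have N: "{t\<in>?N. prefix s t} = {f1 s, f2 s}" if s: "s \<in> L" for s
  proof
    show "{t\<in>?N. prefix s t} \<subseteq> {f1 s, f2 s}"
    proof
      fix t assume t: "t \<in> {t\<in>?N. prefix s t}"
      then obtain s' where s': "s' \<in> L" "t = f1 s' \<or> t = f2 s'" by blast
      then have "prefix s' t" using f by blast
      then have "s' = s"
        using t same_length s s'(1) prefix_same_length_eq[of s t s'] by simp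
      then show "t \<in> {f1 s, f2 s}" using s' by blast
    qed
    show "{f1 s, f2 s} \<subseteq> {t\<in>?N. prefix s t}" using f[OF s] s by simp
  qed
  show thesis
  proof (rule that)
    show "?N \<subseteq> M" "\<forall>t\<in>?N. \<exists>s\<in>L. prefix s t" using f by auto
    show "\<forall>s\<in>L. \<exists>t1 t2. t1 \<noteq> t2 \<and> {t\<in>?N. prefix s t} = {t1, t2} \<and> P s t1 \<and> P s t2"
    proof
      fix s assume "s \<in> L"
      then show "\<exists>t1 t2. t1 \<noteq> t2 \<and> {t\<in>?N. prefix s t} = {t1, t2} \<and> P s t1 \<and> P s t2"
        using f N by (intro exI[of _ "f1 s"] exI[of _ "f2 s"]) simp
    qed
  qed
qed

lemma quasistrong_singleton:
  assumes "is_tree T" "level T a \<noteq> {}"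
  shows "quasistrong {a} {s\<in>T. length s \<le> a}"
proof -
  have "finite {s\<in>T. length s \<le> a}"
    using finite_length_le by (rule finite_subset[rotated]) blast
  moreover have "is_tree {s\<in>T. length s \<le> a}"
    using is_treeD[OF assms(1)] prefix_length_le unfolding is_tree_def
    by (metis (mono_tags, lifting) mem_Collect_eq order_trans)
  moreover have "\<not> consec {a} x x'" for x x' unfolding consec_def by auto
  ultimately show ?thesis using assms(2) unfolding quasistrong_def by auto
qed

lemma quasistrong_subtree_add_top:
  assumes A: "finite A" "A \<noteq> {}" and b: "\<forall>a\<in>A. a < b" and tree: "is_tree T"
    and S: "S \<subseteq> T" "quasistrong A S" "\<forall>s\<in>S. length s \<le> Max A"
      "\<forall>z z' s t. consec A z z' \<longrightarrow> s \<in> level S z \<longrightarrow> t \<in> level S z' \<longrightarrow> prefix s t \<longrightarrow> P s t"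
    and split: "\<forall>s\<in>level S (Max A). \<exists>t1 t2. t1 \<in> level T b \<and> t2 \<in> level T b \<and>
      prefix s t1 \<and> prefix s t2 \<and> t1 \<noteq> t2 \<and> P s t1 \<and> P s t2"
  shows "\<exists>S'\<subseteq>T. quasistrong (insert b A) S' \<and> (\<forall>s\<in>S'. length s \<le> b) \<and>
    (\<forall>z z' s t. consec (insert b A) z z' \<longrightarrow> s \<in> level S' z \<longrightarrow> t \<in> level S' z' \<longrightarrow>
      prefix s t \<longrightarrow> P s t)"
proof -
  let ?L = "level S (Max A)"
  have "\<forall>s\<in>?L. length s = Max A" by simp
  with split obtain N where N: "N \<subseteq> level T b" "\<forall>t\<in>N. \<exists>s\<in>?L. prefix s t"
    "\<forall>s\<in>?L. \<exists>t1 t2. t1 \<noteq> t2 \<and> {t\<in>N. prefix s t} = {t1, t2} \<and> P s t1 \<and> P s t2"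
    by (rule choose_two_extensions)
  have "Max A < b" using b Max_in[OF A] by blast
  moreover have "\<forall>t\<in>N. length t = b \<and> (\<exists>s\<in>?L. prefix s t)" using N(1,2) by auto
  moreover have "\<forall>s\<in>?L. \<exists>t1 t2. t1 \<noteq> t2 \<and> {t\<in>N. prefix s t} = {t1, t2}"
    using N(3) by blast
  ultimately have qs: "quasistrong (insert b A) (graft S N)"
    by (rule quasistrong_graft[OF S(2) A S(3)])
  have below: "level (graft S N) z = level S z" if "z \<in> A" for z
    using level_graft_below[OF quasistrongD(2)[OF S(2)] N(2)] Max_ge[OF A(1) that] .
  have top: "level (graft S N) b = N"
    using S(3) N(1) \<open>Max A < b\<close> by (intro level_graft_top) auto
  have P: "P s t" if "consec (insert b A) z z'" "s \<in> level (graft S N) z"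
    "t \<in> level (graft S N) z'" "prefix s t" for z z' s t
    using that(1) unfolding consec_insert_greater[OF A b]
  proof
    assume "consec A z z'"
    then show ?thesis using S(4) that(2-4) below unfolding consec_def by auto
  next
    assume "z = Max A \<and> z' = b"
    then have "s \<in> ?L" "t \<in> N" using that(2,3) below[OF Max_in[OF A]] top by auto
    then obtain t1 t2 where t12: "{t\<in>N. prefix s t} = {t1, t2}" "P s t1" "P s t2"
      using N(3) by blast
    have "t \<in> {t\<in>N. prefix s t}" using \<open>t \<in> N\<close> that(4) by simp
    then have "t = t1 \<or> t = t2" unfolding t12(1) by simp
    then show ?thesis using t12(2,3) by blast
  qed
  have "graft S N \<subseteq> T" using N(1) by (intro graft_subset[OF tree S(1)]) auto
  moreover have "\<forall>s\<in>graft S N. length s \<le> b"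
    using S(3) N(1) \<open>Max A < b\<close> by (intro graft_length_le) auto
  ultimately show ?thesis using qs P by (intro exI[of _ "graft S N"]) simp
qed

lemma quasistrong_subtree:
  assumes "finite Z" "Z \<noteq> {}" and tree: "is_tree T" and "level T (Min Z) \<noteq> {}"
    and split: "\<And>z z' s. consec Z z z' \<Longrightarrow> s \<in> level T z \<Longrightarrow>
      \<exists>t1 t2. t1 \<in> level T z' \<and> t2 \<in> level T z' \<and> prefix s t1 \<and> prefix s t2 \<and> t1 \<noteq> t2 \<and>
        P s t1 \<and> P s t2"
  shows "\<exists>S\<subseteq>T. quasistrong Z S \<and> (\<forall>s\<in>S. length s \<le> Max Z) \<and>
    (\<forall>z z' s t. consec Z z z' \<longrightarrow> s \<in> level S z \<longrightarrow> t \<in> level S z' \<longrightarrow> prefix s t \<longrightarrow> P s t)"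
proof -
  have "\<forall>z z' s. consec Z z z' \<longrightarrow> s \<in> level T z \<longrightarrow>
      (\<exists>t1 t2. t1 \<in> level T z' \<and> t2 \<in> level T z' \<and> prefix s t1 \<and> prefix s t2 \<and> t1 \<noteq> t2 \<and>
        P s t1 \<and> P s t2)"
    using split by blast
  with assms(1,2,4) show ?thesis
  proof (induction Z rule: finite_linorder_max_induct)
    case empty
    then show ?case by simp
  next
    case (insert b A)
    show ?case
    proof (cases "A = {}")
      case True
      have "\<not> consec {b} z z'" for z z' unfolding consec_def by auto
      then show ?thesis
        using quasistrong_singleton[OF tree] insert.prems(2) True
        by (intro exI[of _ "{s\<in>T. length s \<le> b}"]) auto
    next
      case False
      note consec_iff = consec_insert_greater[OF insert.hyps(1) False insert.hyps(2)]
      have "Min (insert b A) = Min A" "Max (insert b A) = b"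
        using insert.hyps False by (auto intro: Min_insert2 Max_insert2 less_imp_le)
      have "level T (Min A) \<noteq> {}" using insert.prems(2) \<open>Min (insert b A) = Min A\<close> by simp
      moreover have "\<forall>z z' s. consec A z z' \<longrightarrow> s \<in> level T z \<longrightarrow>
          (\<exists>t1 t2. t1 \<in> level T z' \<and> t2 \<in> level T z' \<and> prefix s t1 \<and> prefix s t2 \<and>
            t1 \<noteq> t2 \<and> P s t1 \<and> P s t2)"
        using insert.prems(3) consec_iff by simp
      ultimately obtain S where S: "S \<subseteq> T" "quasistrong A S" "\<forall>s\<in>S. length s \<le> Max A"
        "\<forall>z z' s t. consec A z z' \<longrightarrow> s \<in> level S z \<longrightarrow> t \<in> level S z' \<longrightarrow> prefix s t \<longrightarrow> P s t"
        using insert.IH[OF False] by auto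
      have "\<forall>s\<in>level S (Max A). \<exists>t1 t2. t1 \<in> level T b \<and> t2 \<in> level T b \<and>
          prefix s t1 \<and> prefix s t2 \<and> t1 \<noteq> t2 \<and> P s t1 \<and> P s t2"
        using insert.prems(3) S(1) consec_iff by auto
      then show ?thesis
        using quasistrong_subtree_add_top[OF insert.hyps(1) False insert.hyps(2) tree S]
          \<open>Max (insert b A) = b\<close> by simp
    qed
  qed
qed

lemma quasistrong_restrict:
  assumes qs: "quasistrong X T" and "finite X" "Y \<subseteq> X" "Y \<noteq> {}"
  obtains S where "S \<subseteq> T" "quasistrong Y S"
proof -
  have "finite Y" using assms(2,3) finite_subset by blast
  moreover have "level T (Min Y) \<noteq> {}"
    using quasistrongD(3)[OF qs] Min_in[OF \<open>finite Y\<close> assms(4)] assms(3) by blast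
  moreover have "\<exists>t1 t2. t1 \<in> level T z' \<and> t2 \<in> level T z' \<and> prefix s t1 \<and> prefix s t2 \<and>
      t1 \<noteq> t2 \<and> True \<and> True"
    if c: "consec Y z z'" and s: "s \<in> level T z" for z z' s
  proof -
    have "z \<in> X" "z' \<in> X" "z < z'" using c assms(3) unfolding consec_def by auto
    then show ?thesis using quasistrong_two_extensions[OF qs assms(2) _ _ _ s] by blast
  qed
  ultimately show thesis
    using quasistrong_subtree[OF _ assms(4) quasistrongD(2)[OF qs], where P="\<lambda>_ _. True"] that
    by blast
qed

lemma prehomogeneous_restrict:
  assumes qs: "quasistrong X T" and ph: "prehomogeneous C X T" and "finite X" "Y \<subseteq> X" "Y \<noteq> {}"
  obtains S where "S \<subseteq> T" "quasistrong Y S" "prehomogeneous C Y S"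
proof -
  obtain c where c: "prehomogeneous_with C c X T"
    using ph prehomogeneous_iff_prehomogeneous_with quasistrongD(2)[OF qs] by blast
  have "finite Y" using assms(3,4) finite_subset by blast
  moreover have "level T (Min Y) \<noteq> {}"
    using quasistrongD(3)[OF qs] Min_in[OF \<open>finite Y\<close> assms(5)] assms(4) by blast
  moreover have "\<exists>t1 t2. t1 \<in> level T z' \<and> t2 \<in> level T z' \<and> prefix s t1 \<and> prefix s t2 \<and>
      t1 \<noteq> t2 \<and> colour_between C c s t1 \<and> colour_between C c s t2"
    if cz: "consec Y z z'" and s: "s \<in> level T z" for z z' s
  proof -
    have z: "z \<in> X" "z' \<in> X" "z < z'" using cz assms(4) unfolding consec_def by auto
    then obtain t1 t2 where "t1 \<in> level T z'" "t2 \<in> level T z'" "prefix s t1" "prefix s t2" "t1 \<noteq> t2"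
      using quasistrong_two_extensions[OF qs assms(3) _ _ _ s] by blast
    then show ?thesis
      using prehomogeneous_with_between[OF qs assms(3) c z s] by blast
  qed
  ultimately obtain S where S: "S \<subseteq> T" "quasistrong Y S"
    "\<forall>z z' s t. consec Y z z' \<longrightarrow> s \<in> level S z \<longrightarrow> t \<in> level S z' \<longrightarrow> prefix s t \<longrightarrow>
       colour_between C c s t"
    using quasistrong_subtree[OF _ assms(5) quasistrongD(2)[OF qs], where P="colour_between C c"]
    by blast
  then have "prehomogeneous_with C c Y S" unfolding prehomogeneous_with_def by blast
  then show thesis
    using that S(1,2) prehomogeneous_iff_prehomogeneous_with quasistrongD(2)[OF S(2)] by blast
qed

section \<open>A single tree\<close>

lemma exists_card_le_eq:
  fixes A :: "nat set"
  assumes "finite A" "1 \<le> m" "m \<le> card A"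
  shows "\<exists>y\<in>A. card {z\<in>A. z \<le> y} = m"
  using assms
proof (induction "card A" arbitrary: A rule: less_induct)
  case less
  have M: "Max A \<in> A" using less.prems by (intro Max_in) auto
  show ?case
  proof (cases "m = card A")
    case True
    have "{z\<in>A. z \<le> Max A} = A" using less.prems(1) by auto
    then show ?thesis using M True by metis
  next
    case False
    let ?A = "A - {Max A}"
    have "card ?A < card A" "m \<le> card ?A"
      using M less.prems False by (simp_all add: card_Diff1_less)
    then obtain y where y: "y \<in> ?A" "card {z\<in>?A. z \<le> y} = m"
      using less.hyps less.prems(1,2) by blast
    have "{z\<in>?A. z \<le> y} = {z\<in>A. z \<le> y}"
      using y(1) Max_ge[OF less.prems(1)] by fastforce
    then show ?thesis using y by auto
  qed
qed

lemma card_split_at: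
  fixes X :: "nat set"
  assumes "finite X"
  shows "card X = card {w\<in>X. w \<le> a} + card {w\<in>X. a < w}"
proof -
  have "X = {w\<in>X. w \<le> a} \<union> {w\<in>X. a < w}" by auto
  then show ?thesis
    using assms by (metis (no_types, lifting) card_Un_disjoint finite_Un disjoint_iff mem_Collect_eq not_le)
qed

lemma exists_spaced_subset:
  fixes X :: "nat set"
  assumes X: "finite X" "X \<noteq> {}" and D: "1 \<le> D" and card: "1 + m * D \<le> card X"
  shows "\<exists>Z\<subseteq>X. card Z = Suc m \<and> Min Z = Min X \<and>
    (\<forall>z z'. consec Z z z' \<longrightarrow> D \<le> card {w\<in>X. z < w \<and> w \<le> z'}) \<and>
    card {w\<in>X. w \<le> Max Z} = 1 + m * D"
  using card
proof (induction m)
  case 0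
  have "{w\<in>X. w \<le> Min X} = {Min X}" using Min_in[OF X] Min_le[OF X(1)] by (auto intro: antisym)
  moreover have "\<not> consec {Min X} z z'" for z z' unfolding consec_def by auto
  ultimately show ?case using X by (intro exI[of _ "{Min X}"]) auto
next
  case (Suc m)
  then obtain Z where Z: "Z \<subseteq> X" "card Z = Suc m" "Min Z = Min X"
    "\<forall>z z'. consec Z z z' \<longrightarrow> D \<le> card {w\<in>X. z < w \<and> w \<le> z'}"
    "card {w\<in>X. w \<le> Max Z} = 1 + m * D"
    by fastforce
  let ?a = "Max Z"
  have fin: "finite Z" "Z \<noteq> {}" using Z(1,2) X(1) finite_subset by auto
  have "D \<le> card {w\<in>X. ?a < w}"
    using card_split_at[OF X(1), of ?a] Z(5) Suc.prems by simp
  then obtain y where y: "y \<in> X" "?a < y" and Dy: "card {w\<in>X. ?a < w \<and> w \<le> y} = D"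
    using exists_card_le_eq[of "{w\<in>X. ?a < w}" D] X(1) D by auto
  let ?Z = "insert y Z"
  have greater: "\<forall>z\<in>Z. z < y" using Max_ge[OF fin(1)] y(2) by (meson le_less_trans)
  then have "y \<notin> Z" by blast
  then have "card ?Z = Suc (Suc m)" using Z(2) fin(1) by simp
  moreover have "Min ?Z = Min X" "Max ?Z = y"
    using Z(3) fin greater Min_in[OF fin] by (auto intro: Min_insert2 Max_insert2 less_imp_le)
  moreover have "\<forall>z z'. consec ?Z z z' \<longrightarrow> D \<le> card {w\<in>X. z < w \<and> w \<le> z'}"
    using Z(4) Dy consec_insert_greater[OF fin greater] by auto
  moreover have "card {w\<in>X. w \<le> y} = card {w\<in>X. w \<le> ?a} + D"
  proof -
    have "{w\<in>{w\<in>X. w \<le> y}. w \<le> ?a} = {w\<in>X. w \<le> ?a}" using y(2) by auto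
    moreover have "{w\<in>{w\<in>X. w \<le> y}. ?a < w} = {w\<in>X. ?a < w \<and> w \<le> y}" by auto
    ultimately show ?thesis using card_split_at[of "{w\<in>X. w \<le> y}" ?a] X(1) Dy by simp
  qed
  ultimately show ?case using Z(1,5) y(1) by (intro exI[of _ ?Z]) auto
qed

definition colour_dense :: "(bool list \<Rightarrow> nat) \<Rightarrow> nat \<Rightarrow> nat \<Rightarrow> nat set \<Rightarrow> bool list set \<Rightarrow> bool" where
  "colour_dense C c D X T \<longleftrightarrow> (\<forall>\<tau>\<in>T. \<forall>y\<in>X. length \<tau> \<in> X \<longrightarrow> length \<tau> \<le> y \<longrightarrow>
     D \<le> card {z\<in>X. length \<tau> \<le> z \<and> z \<le> y} \<longrightarrow>
     (\<exists>w\<in>level T y. prefix \<tau> w \<and> colour_between C c \<tau> w))"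

lemma colour_dense_two_extensions:
  assumes qs: "quasistrong X T" and fin: "finite X" and dense: "colour_dense C c D X T"
    and z: "z \<in> X" "z' \<in> X" "z < z'" and D: "D \<le> card {w\<in>X. z < w \<and> w \<le> z'}"
    and s: "s \<in> level T z"
  shows "\<exists>t1 t2. t1 \<in> level T z' \<and> t2 \<in> level T z' \<and> prefix s t1 \<and> prefix s t2 \<and> t1 \<noteq> t2 \<and>
    colour_between C c s t1 \<and> colour_between C c s t2"
proof -
  obtain x' where x': "consec X z x'" "x' \<le> z'" using consec_next[OF fin z] .
  have "{w\<in>X. x' \<le> w \<and> w \<le> z'} = {w\<in>X. z < w \<and> w \<le> z'}"
    using x'(1) unfolding consec_def by (auto simp: not_less)
  then have D': "D \<le> card {w\<in>X. x' \<le> w \<and> w \<le> z'}" using D by simp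
  have "x' \<in> X" using x'(1) unfolding consec_def by simp
  have extend: "\<exists>w\<in>level T z'. prefix u w \<and> colour_between C c u w" if "u \<in> level T x'" for u
    using dense that D' \<open>x' \<in> X\<close> z(2) x'(2) unfolding colour_dense_def by simp
  obtain u1 u2 where u: "u1 \<in> level T x'" "u2 \<in> level T x'" "prefix s u1" "prefix s u2"
    "\<not> compatible u1 u2"
    using quasistrongD(4)[OF qs x'(1) s] by blast
  obtain w1 w2 where w: "w1 \<in> level T z'" "w2 \<in> level T z'" "prefix u1 w1" "prefix u2 w2"
    "colour_between C c u1 w1" "colour_between C c u2 w2"
    using extend[OF u(1)] extend[OF u(2)] by blast
  have "w1 \<noteq> w2"
    using u(5) w(3,4) prefix_same_cases unfolding compatible_def by blast
  moreover have "prefix s w1" "prefix s w2" using u(3,4) w(3,4) by auto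
  moreover have "colour_between C c s w1" "colour_between C c s w2"
    using colour_between_mono u(3,4) w(5,6) by blast+
  ultimately show ?thesis using w(1,2) by blast
qed

lemma colour_dense_prehomogeneous_subtree:
  assumes qs: "quasistrong X T" and X: "finite X" "X \<noteq> {}" and dense: "colour_dense C c D X T"
    and D: "1 \<le> D" and card: "1 + m * D \<le> card X"
  obtains Z S where "Z \<subseteq> X" "card Z = Suc m" "Min Z = Min X" "S \<subseteq> T" "quasistrong Z S"
    "prehomogeneous_with C c Z S"
proof -
  obtain Z where Z: "Z \<subseteq> X" "card Z = Suc m" "Min Z = Min X"
    "\<forall>z z'. consec Z z z' \<longrightarrow> D \<le> card {w\<in>X. z < w \<and> w \<le> z'}"
    using exists_spaced_subset[OF X D card] by blast
  have Z_ne: "finite Z" "Z \<noteq> {}" using Z(1,2) X(1) finite_subset by auto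
  have "level T (Min Z) \<noteq> {}"
    using Z(3) quasistrongD(3)[OF qs] Min_in[OF X] by simp
  moreover have "\<exists>t1 t2. t1 \<in> level T z' \<and> t2 \<in> level T z' \<and> prefix s t1 \<and> prefix s t2 \<and>
      t1 \<noteq> t2 \<and> colour_between C c s t1 \<and> colour_between C c s t2"
    if cz: "consec Z z z'" and s: "s \<in> level T z" for z z' s
  proof -
    have "z \<in> X" "z' \<in> X" "z < z'" using cz Z(1) unfolding consec_def by auto
    then show ?thesis using colour_dense_two_extensions[OF qs X(1) dense _ _ _ _ s] Z(4) cz by blast
  qed
  ultimately obtain S where S: "S \<subseteq> T" "quasistrong Z S"
    "\<forall>z z' s t. consec Z z z' \<longrightarrow> s \<in> level S z \<longrightarrow> t \<in> level S z' \<longrightarrow> prefix s t \<longrightarrow>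
       colour_between C c s t"
    using quasistrong_subtree[OF Z_ne quasistrongD(2)[OF qs], where P="colour_between C c"] by blast
  then have "prehomogeneous_with C c Z S" unfolding prehomogeneous_with_def by blast
  then show thesis using that Z(1-3) S(1,2) by blast
qed

lemma quasistrong_cone:
  assumes qs: "quasistrong X T" and fin: "finite X" and \<tau>: "\<tau> \<in> T" "length \<tau> \<in> X"
  shows "quasistrong {z\<in>X. length \<tau> \<le> z \<and> z \<le> y} {t\<in>T. compatible t \<tau>}"
    (is "quasistrong ?X ?T")
proof -
  have "finite ?T" using quasistrongD(1)[OF qs] by simp
  moreover have "is_tree ?T"
    using is_treeD[OF quasistrongD(2)[OF qs]] compatible_prefix_closed unfolding is_tree_def by blast
  moreover have "level ?T x \<noteq> {}" if x: "x \<in> ?X" for x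
  proof -
    obtain t where "t \<in> level T x" "prefix \<tau> t"
      by (rule quasistrong_extension[OF qs fin \<tau>(2), of x \<tau>]) (use x \<tau>(1) in auto)
    then show ?thesis unfolding compatible_def by auto
  qed
  moreover have "\<exists>t1 t2. t1 \<in> level ?T x' \<and> t2 \<in> level ?T x' \<and> prefix s t1 \<and> prefix s t2 \<and>
      \<not> compatible t1 t2 \<and> {t\<in>level ?T x'. prefix s t} = {t1, t2}"
    if c: "consec ?X x x'" and s: "s \<in> level ?T x" for x x' s
  proof -
    have "consec X x x'" using consec_interval[OF c] .
    moreover have "length \<tau> \<le> x" using c unfolding consec_def by simp
    moreover have "compatible \<tau> s" using s unfolding compatible_def by auto
    ultimately have "prefix \<tau> s" using s by (intro compatible_prefix) auto
    then have "compatible t \<tau>" if "prefix s t" for t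
      using that prefix_order.order_trans unfolding compatible_def by blast
    then have eq: "{t\<in>level ?T x'. prefix s t} = {t\<in>level T x'. prefix s t}" by auto
    have "s \<in> level T x" using s by simp
    then obtain t1 t2 where "t1 \<in> level T x'" "t2 \<in> level T x'" "prefix s t1" "prefix s t2"
      "\<not> compatible t1 t2" "{t\<in>level T x'. prefix s t} = {t1, t2}"
      using quasistrongD(4)[OF qs \<open>consec X x x'\<close>] by blast
    then show ?thesis unfolding eq using \<open>\<And>t. prefix s t \<Longrightarrow> compatible t \<tau>\<close> by auto
  qed
  ultimately show ?thesis unfolding quasistrong_def by blast
qed

text \<open>Only nodes between the levels Min X and Max X that lie below the top level are
  constrained: this is what survives the passage to a cone.\<close>

definition colours_within :: "(bool list \<Rightarrow> nat) \<Rightarrow> nat set \<Rightarrow> nat set \<Rightarrow> bool list set \<Rightarrow> bool" where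
  "colours_within C K X T \<longleftrightarrow>
     (\<forall>t\<in>T. \<forall>w\<in>level T (Max X). Min X \<le> length t \<longrightarrow> prefix t w \<longrightarrow> C t \<in> K)"

lemma colours_within_nonempty:
  assumes qs: "quasistrong X T" and X: "finite X" "X \<noteq> {}" and K: "colours_within C K X T"
  shows "K \<noteq> {}"
proof -
  obtain v where v: "v \<in> level T (Min X)" using quasistrongD(3)[OF qs Min_in[OF X]] by blast
  obtain w where "w \<in> level T (Max X)" "prefix v w"
    by (rule quasistrong_extension[OF qs X(1) Min_in[OF X] Max_in[OF X] _ v])
      (simp add: Max_ge[OF X(1) Min_in[OF X]])
  then show ?thesis using K v unfolding colours_within_def by auto
qed

lemma cone_avoiding_colour:
  assumes qs: "quasistrong X T" and X: "finite X" "X \<noteq> {}" and K: "colours_within C K X T"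
    and sparse: "\<not> colour_dense C c D X T"
  obtains \<tau> X' where "\<tau> \<in> T" "X' \<subseteq> X" "finite X'" "length \<tau> \<in> X'" "Min X' = length \<tau>"
    "D \<le> card X'" "quasistrong X' {t\<in>T. compatible t \<tau>}"
    "colours_within C (K - {c}) X' {t\<in>T. compatible t \<tau>}"
proof -
  obtain \<tau> y where \<tau>: "\<tau> \<in> T" "length \<tau> \<in> X" and y: "y \<in> X" "length \<tau> \<le> y"
    and D: "D \<le> card {z\<in>X. length \<tau> \<le> z \<and> z \<le> y}"
    and avoid: "\<not> (\<exists>w\<in>level T y. prefix \<tau> w \<and> colour_between C c \<tau> w)"
    using sparse unfolding colour_dense_def by blast
  let ?X = "{z\<in>X. length \<tau> \<le> z \<and> z \<le> y}"
  let ?T = "{t\<in>T. compatible t \<tau>}"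
  have fin: "finite ?X" using X(1) by simp
  have min: "Min ?X = length \<tau>" using fin \<tau>(2) y(2) by (intro Min_eqI) auto
  have max: "Max ?X = y" using fin y by (intro Max_eqI) auto
  have "C t \<in> K - {c}"
    if t: "t \<in> ?T" and w: "w \<in> level ?T y" and long: "length \<tau> \<le> length t" and tw: "prefix t w" for t w
  proof
    have "prefix \<tau> t" using t long compatible_prefix unfolding compatible_def by auto
    then have "\<not> colour_between C c \<tau> w" using avoid w tw by auto
    then show "C t \<notin> {c}" using \<open>prefix \<tau> t\<close> tw unfolding colour_between_def by auto
    have "w \<in> level T y" using w by simp
    then obtain w' where w': "w' \<in> level T (Max X)" "prefix w w'"
      by (rule quasistrong_extension[OF qs X(1) y(1) Max_in[OF X] Max_ge[OF X(1) y(1)]])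
    have "Min X \<le> length t" using Min_le[OF X(1) \<tau>(2)] long by simp
    then show "C t \<in> K"
      using K t w' tw prefix_order.order_trans unfolding colours_within_def by blast
  qed
  then have "colours_within C (K - {c}) ?X ?T"
    unfolding colours_within_def min max by blast
  moreover have "quasistrong ?X ?T" using quasistrong_cone[OF qs X(1) \<tau>] .
  ultimately show thesis using that[of \<tau> ?X] \<tau> y fin min D by auto
qed

lemma card_Min_replace_Min:
  fixes Z :: "nat set"
  assumes Z: "finite Z" "Z \<noteq> {}" and x0: "x0 \<le> Min Z"
  shows "card (insert x0 (Z - {Min Z})) = card Z" "Min (insert x0 (Z - {Min Z})) = x0"
proof -
  have "x0 \<notin> Z - {Min Z}" using x0 Min_le[OF Z(1)] by fastforce
  then show "card (insert x0 (Z - {Min Z})) = card Z"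
    using Z Min_in[OF Z] by (simp add: card_Suc_Diff1 card_gt_0_iff)
  show "Min (insert x0 (Z - {Min Z})) = x0"
    using Z(1) x0 Min_le[OF Z(1)] by (intro Min_eqI) (auto intro: order_trans)
qed

lemma consec_replace_Min:
  fixes Z :: "nat set"
  assumes Z: "finite Z" "Z \<noteq> {}" and x0: "x0 \<le> Min Z"
    and c: "consec (insert x0 (Z - {Min Z})) x x'"
  shows "(x = x0 \<and> consec Z (Min Z) x') \<or> (x \<noteq> x0 \<and> consec Z x x')"
proof -
  let ?m = "Min Z"
  let ?Z = "insert x0 (Z - {?m})"
  have x: "x \<in> ?Z" "x' \<in> ?Z" "x < x'" and between: "\<forall>w\<in>?Z. \<not> (x < w \<and> w < x')"
    using c unfolding consec_def by auto
  have ge: "?m \<le> w" if "w \<in> Z" for w using Z(1) that by simp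
  have "x0 \<le> x" using x(1) x0 ge by force
  then have x': "x' \<in> Z" "?m < x'" using x(2,3) ge by (auto simp: le_less)
  show ?thesis
  proof (cases "x = x0")
    case True
    have "\<not> (?m < w \<and> w < x')" if "w \<in> Z" for w
      using between that True x0 by auto
    then have "consec Z ?m x'" using Min_in[OF Z] x' unfolding consec_def by simp
    then show ?thesis using True by simp
  next
    case False
    then have "x \<in> Z" "?m < x" using x(1) ge by (auto simp: le_less)
    moreover have "\<not> (x < w \<and> w < x')" if "w \<in> Z" for w
      using between that \<open>?m < x\<close> by auto
    ultimately show ?thesis using False x' x(3) unfolding consec_def by simp
  qed
qed

lemma cone_root_levels:
  assumes qs: "quasistrong Z S" and Z: "finite Z" "Z \<noteq> {}"
    and cone: "\<forall>s\<in>S. compatible s \<tau>" and \<tau>: "length \<tau> = Min Z"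
  shows "\<tau> \<in> level S (Min Z)" and "\<And>t. t \<in> S \<Longrightarrow> Min Z \<le> length t \<Longrightarrow> prefix \<tau> t"
    and "\<And>x. x \<le> Min Z \<Longrightarrow> level S x = {take x \<tau>}"
proof -
  obtain v where v: "v \<in> level S (Min Z)" using quasistrongD(3)[OF qs Min_in[OF Z]] by blast
  then have "v = \<tau>" using cone \<tau> compatible_same_length by simp
  then show root: "\<tau> \<in> level S (Min Z)" using v by simp
  show "prefix \<tau> t" if "t \<in> S" "Min Z \<le> length t" for t
  proof (rule compatible_prefix)
    show "compatible \<tau> t" using cone that(1) unfolding compatible_def by auto
  qed (use that(2) \<tau> in simp)
  show "level S x = {take x \<tau>}" if "x \<le> Min Z" for x
  proof
    show "level S x \<subseteq> {take x \<tau>}"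
      using cone that \<tau> compatible_eq_take by fastforce
    have "take x \<tau> \<in> S" using is_treeD[OF quasistrongD(2)[OF qs] _ take_is_prefix] root by simp
    then show "{take x \<tau>} \<subseteq> level S x" using that \<tau> by simp
  qed
qed

lemma quasistrong_lower_root:
  assumes qs: "quasistrong Z S" and Z: "finite Z" "Z \<noteq> {}"
    and cone: "\<forall>s\<in>S. compatible s \<tau>" and \<tau>: "length \<tau> = Min Z" and x0: "x0 \<le> Min Z"
  shows "quasistrong (insert x0 (Z - {Min Z})) S"
proof -
  note root = cone_root_levels[OF qs Z cone \<tau>]
  have "level S x \<noteq> {}" if "x \<in> insert x0 (Z - {Min Z})" for x
    using that root(3)[OF x0] quasistrongD(3)[OF qs] by auto
  moreover have "\<exists>t1 t2. t1 \<in> level S x' \<and> t2 \<in> level S x' \<and> prefix s t1 \<and> prefix s t2 \<and>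
      \<not> compatible t1 t2 \<and> {t\<in>level S x'. prefix s t} = {t1, t2}"
    if c: "consec (insert x0 (Z - {Min Z})) x x'" and s: "s \<in> level S x" for x x' s
    using consec_replace_Min[OF Z x0 c]
  proof
    assume x: "x = x0 \<and> consec Z (Min Z) x'"
    then have "s = take x0 \<tau>" using s root(3)[OF x0] by simp
    then have "prefix s \<tau>" by (simp add: take_is_prefix)
    have "Min Z < x'" using x unfolding consec_def by simp
    then have "prefix \<tau> t" if "t \<in> level S x'" for t using root(2) that by simp
    then have "{t\<in>level S x'. prefix s t} = {t\<in>level S x'. prefix \<tau> t}"
      using \<open>prefix s \<tau>\<close> prefix_order.order_trans by blast
    then show ?thesis
      using quasistrongD(4)[OF qs _ root(1)] x \<open>prefix s \<tau>\<close> prefix_order.order_trans by metis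
  next
    assume "x \<noteq> x0 \<and> consec Z x x'"
    then show ?thesis using quasistrongD(4)[OF qs _ s] by blast
  qed
  ultimately show ?thesis
    using quasistrongD(1,2)[OF qs] unfolding quasistrong_def by blast
qed

lemma prehomogeneous_with_lower_root:
  assumes qs: "quasistrong Z S" and ph: "prehomogeneous_with C c Z S" and Z: "finite Z" "Z \<noteq> {}"
    and cone: "\<forall>s\<in>S. compatible s \<tau>" and \<tau>: "length \<tau> = Min Z" and x0: "x0 \<le> Min Z"
  shows "prehomogeneous_with C c (insert x0 (Z - {Min Z})) S"
  unfolding prehomogeneous_with_def
proof (intro allI impI ballI)
  note root = cone_root_levels[OF qs Z cone \<tau>]
  fix x x' s t
  assume c: "consec (insert x0 (Z - {Min Z})) x x'" and s: "s \<in> level S x"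
    and t: "t \<in> level S x'" and st: "prefix s t"
  show "colour_between C c s t"
    using consec_replace_Min[OF Z x0 c]
  proof
    assume x: "x = x0 \<and> consec Z (Min Z) x'"
    then have "s = take x0 \<tau>" using s root(3)[OF x0] by simp
    have "Min Z < x'" using x unfolding consec_def by simp
    then have "prefix \<tau> t" using root(2) t by simp
    then have "colour_between C c \<tau> t"
      using prehomogeneous_withD[OF ph _ root(1) t] x by simp
    then show ?thesis using colour_between_mono \<open>s = take x0 \<tau>\<close> take_is_prefix by blast
  next
    assume "x \<noteq> x0 \<and> consec Z x x'"
    then show ?thesis using prehomogeneous_withD[OF ph _ s t st] by simp
  qed
qed

lemma lower_root:
  assumes qs: "quasistrong Z S" and ph: "prehomogeneous_with C c Z S" and Z: "finite Z" "Z \<noteq> {}"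
    and cone: "\<forall>s\<in>S. compatible s \<tau>" and \<tau>: "length \<tau> = Min Z" and x0: "x0 \<le> Min Z"
  obtains Z' where "Z' \<subseteq> insert x0 Z" "card Z' = card Z" "Min Z' = x0" "quasistrong Z' S"
    "prehomogeneous_with C c Z' S"
proof
  show "insert x0 (Z - {Min Z}) \<subseteq> insert x0 Z" by blast
  show "card (insert x0 (Z - {Min Z})) = card Z" "Min (insert x0 (Z - {Min Z})) = x0"
    using card_Min_replace_Min[OF Z x0] by simp_all
  show "quasistrong (insert x0 (Z - {Min Z})) S"
    using quasistrong_lower_root[OF qs Z cone \<tau> x0] .
  show "prehomogeneous_with C c (insert x0 (Z - {Min Z})) S"
    using prehomogeneous_with_lower_root[OF qs ph Z cone \<tau> x0] .
qed

lemma prehomogeneous_subtree_colours: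
  assumes "finite K" "card K \<le> k" "quasistrong X T" "finite X" "X \<noteq> {}"
    "colours_within C K X T" "1 \<le> n" "n ^ Suc k \<le> card X"
  shows "\<exists>Z S c. Z \<subseteq> X \<and> card Z = n \<and> Min Z = Min X \<and> S \<subseteq> T \<and> quasistrong Z S \<and>
    prehomogeneous_with C c Z S"
  using assms
proof (induction k arbitrary: K X T)
  case 0
  then show ?case using colours_within_nonempty[OF "0.prems"(3-6)] by simp
next
  case (Suc k)
  note qs = Suc.prems(3) and X = Suc.prems(4,5) and n = Suc.prems(7)
  obtain c where "c \<in> K" using colours_within_nonempty[OF qs X Suc.prems(6)] by blast
  define D where "D = n ^ Suc k"
  have D: "1 \<le> D" using n by (simp add: D_def)
  show ?case
  proof (cases "colour_dense C c D X T")
    case True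
    have "n * D = (n - 1) * D + D" using n by (cases n) simp_all
    moreover have "n * D \<le> card X" using Suc.prems(8) by (simp add: D_def)
    ultimately have "1 + (n - 1) * D \<le> card X" using D by linarith
    then obtain Z S where "Z \<subseteq> X" "card Z = Suc (n - 1)" "Min Z = Min X" "S \<subseteq> T"
      "quasistrong Z S" "prehomogeneous_with C c Z S"
      using colour_dense_prehomogeneous_subtree[OF qs X True D] by blast
    then show ?thesis using n by auto
  next
    case False
    obtain \<tau> X' where \<tau>: "\<tau> \<in> T" "X' \<subseteq> X" "finite X'" "length \<tau> \<in> X'" "Min X' = length \<tau>"
      "D \<le> card X'" "quasistrong X' {t\<in>T. compatible t \<tau>}"
      "colours_within C (K - {c}) X' {t\<in>T. compatible t \<tau>}"
      using cone_avoiding_colour[OF qs X Suc.prems(6) False] by blast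
    have "finite (K - {c})" "card (K - {c}) \<le> k" "X' \<noteq> {}"
      using Suc.prems(1,2) \<open>c \<in> K\<close> \<tau>(4) by auto
    then have "\<exists>Z S c'. Z \<subseteq> X' \<and> card Z = n \<and> Min Z = Min X' \<and> S \<subseteq> {t\<in>T. compatible t \<tau>} \<and>
        quasistrong Z S \<and> prehomogeneous_with C c' Z S"
      using Suc.IH[OF _ _ \<tau>(7,3) _ \<tau>(8) n] \<tau>(6) by (simp add: D_def)
    then obtain Z S c' where Z: "Z \<subseteq> X'" "card Z = n" "Min Z = length \<tau>"
      "S \<subseteq> {t\<in>T. compatible t \<tau>}" "quasistrong Z S" "prehomogeneous_with C c' Z S"
      using \<tau>(5) by metis
    have Z_ne: "finite Z" "Z \<noteq> {}" using Z(1,2) \<tau>(3) n finite_subset by auto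
    have cone: "\<forall>s\<in>S. compatible s \<tau>" using Z(4) by auto
    have root: "Min X \<le> Min Z" using Z(3) \<tau>(2,4) Min_le[OF X(1)] by auto
    obtain Z' where Z': "Z' \<subseteq> insert (Min X) Z" "card Z' = n" "Min Z' = Min X"
      "quasistrong Z' S" "prehomogeneous_with C c' Z' S"
      using lower_root[OF Z(5,6) Z_ne cone Z(3)[symmetric] root] Z(2) by metis
    moreover have "Z' \<subseteq> X" using Z'(1) Z(1) \<tau>(2) Min_in[OF X] by auto
    moreover have "S \<subseteq> T" using Z(4) by auto
    ultimately show ?thesis by blast
  qed
qed

lemma prehomogeneous_subtree:
  assumes qs: "quasistrong X T" and X: "finite X" "X \<noteq> {}" and colours: "\<forall>s\<in>T. C s < k"
    and n: "1 \<le> n" and card: "n ^ Suc k \<le> card X"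
  shows "\<exists>Z S. Z \<subseteq> X \<and> card Z = n \<and> Min Z = Min X \<and> S \<subseteq> T \<and> quasistrong Z S \<and>
    prehomogeneous C Z S"
proof -
  have within: "colours_within C {..<k} X T" using colours unfolding colours_within_def by auto
  have "\<exists>Z S c. Z \<subseteq> X \<and> card Z = n \<and> Min Z = Min X \<and> S \<subseteq> T \<and> quasistrong Z S \<and>
      prehomogeneous_with C c Z S"
    by (rule prehomogeneous_subtree_colours[where k = k, OF finite_lessThan _ qs X within n card])
      simp
  then obtain Z S c where Z: "Z \<subseteq> X" "card Z = n" "Min Z = Min X" "S \<subseteq> T" "quasistrong Z S"
    "prehomogeneous_with C c Z S"
    by blast
  then have "prehomogeneous C Z S"
    using prehomogeneous_iff_prehomogeneous_with[OF quasistrongD(2)[OF Z(5)]] by blast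
  then show ?thesis using Z(1-5) by blast
qed

section \<open>Finitely many trees\<close>

lemma prehomogeneous_restrict_family:
  assumes S: "\<forall>\<sigma>\<in>R. S \<sigma> \<subseteq> T \<sigma> \<and> quasistrong X (S \<sigma>) \<and> prehomogeneous C X (S \<sigma>)"
    and "finite X" "Y \<subseteq> X" "Y \<noteq> {}"
  obtains S' where "\<forall>\<sigma>\<in>R. S' \<sigma> \<subseteq> T \<sigma> \<and> quasistrong Y (S' \<sigma>) \<and> prehomogeneous C Y (S' \<sigma>)"
proof -
  have "\<exists>S2. S2 \<subseteq> T \<sigma> \<and> quasistrong Y S2 \<and> prehomogeneous C Y S2" if \<sigma>: "\<sigma> \<in> R" for \<sigma>
  proof -
    obtain S2 where "S2 \<subseteq> S \<sigma>" "quasistrong Y S2" "prehomogeneous C Y S2"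
      using prehomogeneous_restrict[OF _ _ assms(2-4)] S \<sigma> by metis
    then show ?thesis using S \<sigma> by blast
  qed
  then have "\<forall>\<sigma>\<in>R. \<exists>S2. S2 \<subseteq> T \<sigma> \<and> quasistrong Y S2 \<and> prehomogeneous C Y S2" by blast
  from bchoice[OF this] show thesis using that by blast
qed

lemma prehomogeneous_subtrees:
  assumes R: "finite R" and n: "1 \<le> n" and X: "finite X" "X \<noteq> {}"
    and card: "n ^ (Suc k ^ card R) \<le> card X"
    and T: "\<forall>\<rho>\<in>R. quasistrong X (T \<rho>) \<and> (\<forall>s\<in>T \<rho>. C s < k)"
  shows "\<exists>Z S. Z \<subseteq> X \<and> card Z = n \<and> Min Z = Min X \<and>
    (\<forall>\<rho>\<in>R. S \<rho> \<subseteq> T \<rho> \<and> quasistrong Z (S \<rho>) \<and> prehomogeneous C Z (S \<rho>))"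
  using R n card T
proof (induction R arbitrary: n rule: finite_induct)
  case empty
  then have "1 + (n - 1) * 1 \<le> card X" by simp
  from exists_spaced_subset[OF X order_refl this]
  obtain Z where "Z \<subseteq> X" "card Z = Suc (n - 1)" "Min Z = Min X" by auto
  then show ?case using empty.prems(1) by auto
next
  case (insert \<rho> R)
  let ?N = "n ^ Suc k"
  have N: "1 \<le> ?N" using insert.prems(1) by simp
  have "n ^ (Suc k ^ card (insert \<rho> R)) = n ^ (Suc k * Suc k ^ card R)"
    using insert.hyps(1,2) by simp
  also have "\<dots> = ?N ^ (Suc k ^ card R)" by (rule power_mult)
  finally have "?N ^ (Suc k ^ card R) \<le> card X" using insert.prems(2) by simp
  then obtain Z1 S1 where Z1: "Z1 \<subseteq> X" "card Z1 = ?N" "Min Z1 = Min X"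
    "\<forall>\<sigma>\<in>R. S1 \<sigma> \<subseteq> T \<sigma> \<and> quasistrong Z1 (S1 \<sigma>) \<and> prehomogeneous C Z1 (S1 \<sigma>)"
    using insert.IH[OF N] insert.prems(3) by blast
  have Z1_ne: "finite Z1" "Z1 \<noteq> {}" using Z1(1,2) N X(1) finite_subset by auto
  have "quasistrong X (T \<rho>)" using insert.prems(3) by simp
  then obtain T' where T': "T' \<subseteq> T \<rho>" "quasistrong Z1 T'"
    using quasistrong_restrict[OF _ X(1) Z1(1) Z1_ne(2)] by metis
  have "\<forall>s\<in>T'. C s < k" using T'(1) insert.prems(3) by auto
  then have "\<exists>Z S0. Z \<subseteq> Z1 \<and> card Z = n \<and> Min Z = Min Z1 \<and> S0 \<subseteq> T' \<and> quasistrong Z S0 \<and>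
      prehomogeneous C Z S0"
    by (rule prehomogeneous_subtree[OF T'(2) Z1_ne _ insert.prems(1)]) (simp add: Z1(2))
  then obtain Z S0 where Z: "Z \<subseteq> Z1" "card Z = n" "Min Z = Min Z1" "S0 \<subseteq> T'"
    "quasistrong Z S0" "prehomogeneous C Z S0"
    by blast
  have Z_ne: "Z \<noteq> {}" using Z(2) insert.prems(1) by auto
  obtain S where S: "\<forall>\<sigma>\<in>R. S \<sigma> \<subseteq> T \<sigma> \<and> quasistrong Z (S \<sigma>) \<and> prehomogeneous C Z (S \<sigma>)"
    using prehomogeneous_restrict_family[OF Z1(4) Z1_ne(1) Z(1) Z_ne] .
  then have "\<forall>\<sigma>\<in>insert \<rho> R. (S(\<rho> := S0)) \<sigma> \<subseteq> T \<sigma> \<and> quasistrong Z ((S(\<rho> := S0)) \<sigma>) \<and>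
      prehomogeneous C Z ((S(\<rho> := S0)) \<sigma>)"
    using S Z(4-6) T'(1) by auto
  then show ?case using Z(1-3) Z1(1,3) by (intro exI[of _ Z] exI[of _ "S(\<rho> := S0)"]) auto
qed

theorem lemma2p17:
  shows "\<exists>hbar. primrec3 hbar \<and>
    (\<forall>(n::nat) (k::nat) (X::nat set) (T::bool list \<Rightarrow> bool list set) (C::bool list \<Rightarrow> nat).
       n \<ge> 1 \<and> finite X \<and> X \<noteq> {} \<and>
       card X \<ge> hbar (Min X) n k \<and>
       (\<forall>\<rho>. length \<rho> = Min X \<longrightarrow>
           quasistrong X (T \<rho>) \<and> (\<forall>s\<in>T \<rho>. compatible s \<rho>)) \<and>
       (\<forall>\<rho>. length \<rho> = Min X \<longrightarrow> (\<forall>s\<in>T \<rho>. C s < k))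
     \<longrightarrow>
       (\<exists>Z S. Z \<subseteq> X \<and> card Z = n \<and> Min Z = Min X \<and>
          (\<forall>\<rho>. length \<rho> = Min X \<longrightarrow>
             S \<rho> \<subseteq> T \<rho> \<and> quasistrong Z (S \<rho>) \<and> prehomogeneous C Z (S \<rho>))))"
proof (intro exI[of _ tree_ramsey_bound] conjI primrec3_tree_ramsey_bound allI impI)
  fix n k :: nat and X :: "nat set" and T :: "bool list \<Rightarrow> bool list set" and C :: "bool list \<Rightarrow> nat"
  let ?R = "{\<rho> :: bool list. length \<rho> = Min X}"
  assume "1 \<le> n \<and> finite X \<and> X \<noteq> {} \<and> tree_ramsey_bound (Min X) n k \<le> card X \<and>
    (\<forall>\<rho>. length \<rho> = Min X \<longrightarrow> quasistrong X (T \<rho>) \<and> (\<forall>s\<in>T \<rho>. compatible s \<rho>)) \<and>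
    (\<forall>\<rho>. length \<rho> = Min X \<longrightarrow> (\<forall>s\<in>T \<rho>. C s < k))"
  then have n: "1 \<le> n" and X: "finite X" "X \<noteq> {}" and card: "tree_ramsey_bound (Min X) n k \<le> card X"
    and T: "\<forall>\<rho>\<in>?R. quasistrong X (T \<rho>) \<and> (\<forall>s\<in>T \<rho>. C s < k)"
    by auto
  have R: "finite ?R" "card ?R = 2 ^ Min X"
    using finite_lists_length_eq[of "UNIV :: bool set"] card_lists_length_eq[of "UNIV :: bool set"]
    by simp_all
  then have "n ^ (Suc k ^ card ?R) \<le> card X" using card unfolding tree_ramsey_bound_def by simp
  from prehomogeneous_subtrees[OF R(1) n X this T]
  show "\<exists>Z S. Z \<subseteq> X \<and> card Z = n \<and> Min Z = Min X \<and> (\<forall>\<rho>. length \<rho> = Min X \<longrightarrow>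
      S \<rho> \<subseteq> T \<rho> \<and> quasistrong Z (S \<rho>) \<and> prehomogeneous C Z (S \<rho>))"
    by auto
qed

end
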